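(* Let $N:(0,1]\to\mathbb{N}$ be a non-increasing function. Then there exist a distribution $\mu$ on $\{0,1\}^{\mathbb{N}}$ and a countable set $E\subset(0,1]$ such that $\mathcal{N}_\xi(\varepsilon)=N(\varepsilon)$ for every $\varepsilon\in(0,\tfrac12]\setminus E$, and $\Delta_n(\mu)\to0$ as $n\to\infty$.
   Context: For $X\sim\mu$, define $\xi(i,j):=\mathbb{P}(X_i\neq X_j)$ for $i,j\in\mathbb{N}$. For $\varepsilon>0$, $\mathcal{N}_\xi(\varepsilon)$ is the $\varepsilon$-covering number of $(\mathbb{N},\xi)$: the minimal cardinality of a set $S\subset\mathbb{N}$ such that every $i\in\mathbb{N}$ has some $s\in S$ with $\xi(i,s)\le\varepsilon$. For $n\ge1$, with $X^{(1)},\dots,X^{(n)}$ i.i.d. from $\mu$, $\Delta_n(\mu):=\mathbb{E}\sup_{j\in\mathbb{N}}\left|\frac1n\sum_{i=1}^nX^{(i)}_j-\mathbb{E}[X_j]\right|$. *)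

theory Defs
  imports "HOL-Probability.Probability"
begin

text \<open>A distribution on {0,1}^N: a probability measure on the product sigma-algebra
  of (nat => bool), coordinate value True encoding 1.\<close>

definition cube_space :: "(nat \<Rightarrow> bool) measure" where
  "cube_space = Pi\<^sub>M UNIV (\<lambda>_. count_space UNIV)"

definition xi :: "(nat \<Rightarrow> bool) measure \<Rightarrow> nat \<Rightarrow> nat \<Rightarrow> real" where
  "xi M i j = measure M {x \<in> space M. x i \<noteq> x j}"

text \<open>epsilon-covering number of (N, xi); infinity if no finite cover exists.\<close>
definition covnum :: "(nat \<Rightarrow> bool) measure \<Rightarrow> real \<Rightarrow> enat" where
  "covnum M \<epsilon> = Inf {enat (card S) | S. finite S \<and> (\<forall>i. \<exists>s\<in>S. xi M i s \<le> \<epsilon>)}"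

text \<open>Delta_n(mu) = E sup_j |(1/n) sum_{i<n} X^(i)_j - E X_j|, with the n i.i.d.
  samples realised on the product measure of n copies of M.\<close>
definition Delta :: "(nat \<Rightarrow> bool) measure \<Rightarrow> nat \<Rightarrow> real" where
  "Delta M n = (\<integral>\<omega>. (SUP j. \<bar>(\<Sum>i<n. of_bool (\<omega> i j)) / real n
       - measure M {x \<in> space M. x j}\<bar>) \<partial>(Pi\<^sub>M {..<n} (\<lambda>_. M)))"

end

theory Submission
  imports Defs
begin

text \<open>
  Given radii \<open>r\<^sub>j \<in> [0, 1/2]\<close> and a sequence \<open>\<omega>\<close> of independent uniform seeds on \<open>[0, 1]\<close>,
  switch coordinate \<open>j\<close> on when the shared seed \<open>\<omega> 0\<close> lies below \<open>2 r\<^sub>j\<close> and the private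
  seed \<open>\<omega> (j + 1)\<close> lies below \<open>1/2\<close>. Then \<open>P(X\<^sub>j) = r\<^sub>j\<close> and
  \<open>P(X\<^sub>i \<and> X\<^sub>j) = min r\<^sub>i r\<^sub>j / 2\<close>, so \<open>\<xi>(i, j) = max r\<^sub>i r\<^sub>j\<close> for \<open>i \<noteq> j\<close>.
  For such a distance an \<open>\<epsilon>\<close>-net must contain every \<open>j\<close> with \<open>r\<^sub>j > \<epsilon>\<close> and one further
  point, which covers everything else. Taking \<open>r\<^sub>j\<close> to be the supremum of the scales at which
  \<open>N\<close> exceeds \<open>j + 1\<close>, exactly \<open>N(\<epsilon>) - 1\<close> radii exceed \<open>\<epsilon>\<close> unless \<open>\<epsilon>\<close> is itself a radius.

  For \<open>\<Delta>\<^sub>n\<close>, fix \<open>\<delta> > 0\<close>: the finitely many coordinates with \<open>r\<^sub>j > \<delta>\<close> have mean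
  deviation at most \<open>1/\<surd>n\<close> each (second moment), and every other coordinate is on only
  when \<open>\<omega> 0 < 2\<delta>\<close>, so together they contribute at most \<open>2\<delta> + \<delta>\<close>.
\<close>

section \<open>Covering numbers of max-distances\<close>

lemma covnum_max_radii:
  fixes M :: "(nat \<Rightarrow> bool) measure" and r :: "nat \<Rightarrow> real"
  assumes xi: "\<And>i j. i \<noteq> j \<Longrightarrow> xi M i j = max (r i) (r j)"
    and \<epsilon>: "0 \<le> \<epsilon>" and fin: "finite {j. \<epsilon> < r j}"
  shows "covnum M \<epsilon> = enat (card {j. \<epsilon> < r j} + 1)"
proof -
  define B where "B = {j. \<epsilon> < r j}"
  have finB: "finite B" using fin by (simp add: B_def)
  obtain i\<^sub>0 where i\<^sub>0: "i\<^sub>0 \<notin> B"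
    using ex_new_if_finite[OF infinite_UNIV_nat finB] by blast
  have self: "xi M i i \<le> \<epsilon>" for i using \<epsilon> by (simp add: xi_def)
  have light: "xi M i s \<le> \<epsilon>" if "i \<notin> B" "s \<notin> B" for i s
    using that xi[of i s] self[of i] by (cases "i = s") (auto simp: B_def)
  have heavy: "i = s" if "xi M i s \<le> \<epsilon>" "i \<in> B \<or> s \<in> B" for i s
    using that xi[of i s] by (cases "i = s") (auto simp: B_def)
  have "card B + 1 \<le> card S" if S: "finite S" "\<forall>i. \<exists>s\<in>S. xi M i s \<le> \<epsilon>" for S
  proof -
    have "B \<subseteq> S" using S(2) heavy by blast
    moreover obtain s where "s \<in> S" "s \<notin> B" using S(2) heavy i\<^sub>0 by blast
    ultimately have "insert s B \<subseteq> S" by blast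
    from card_mono[OF S(1) this] show ?thesis using finB \<open>s \<notin> B\<close> by simp
  qed
  then have "enat (card B + 1) \<le> covnum M \<epsilon>"
    unfolding covnum_def by (intro Inf_greatest) auto
  moreover have "\<forall>i. \<exists>s\<in>insert i\<^sub>0 B. xi M i s \<le> \<epsilon>" using self light i\<^sub>0 by blast
  then have "covnum M \<epsilon> \<le> enat (card (insert i\<^sub>0 B))"
    unfolding covnum_def using finB by (intro Inf_lower) blast
  ultimately show ?thesis using finB i\<^sub>0 unfolding B_def by simp
qed

section \<open>Radii realising a covering profile\<close>

definition radius :: "(real \<Rightarrow> nat) \<Rightarrow> nat \<Rightarrow> real" where
  "radius N j = Sup (insert 0 {e. 0 < e \<and> e \<le> 1/2 \<and> Suc j < N e})"

lemma bdd_above_radius_set: "bdd_above (insert 0 {e::real. 0 < e \<and> e \<le> 1/2 \<and> P e})"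
  by (auto intro: bdd_aboveI[of _ "1/2"])

lemma radius_nonneg: "0 \<le> radius N j"
  unfolding radius_def by (rule cSup_upper[OF insertI1 bdd_above_radius_set])

lemma radius_le_half: "radius N j \<le> 1/2"
  unfolding radius_def by (rule cSup_least) auto

lemma le_radius:
  assumes "0 < \<epsilon>" "\<epsilon> \<le> 1/2" "Suc j < N \<epsilon>"
  shows "\<epsilon> \<le> radius N j"
  unfolding radius_def using assms by (intro cSup_upper[OF _ bdd_above_radius_set]) auto

lemma Suc_less_if_less_radius:
  assumes mono: "\<And>a b. 0 < a \<Longrightarrow> a \<le> b \<Longrightarrow> b \<le> 1 \<Longrightarrow> N b \<le> N a"
    and "0 < \<delta>" "\<delta> < radius N j"
  shows "Suc j < N \<delta>"
proof -
  obtain e where e: "e \<in> insert 0 {e. 0 < e \<and> e \<le> 1/2 \<and> Suc j < N e}" "\<delta> < e"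
    using less_cSupD[OF insert_not_empty] assms(3) unfolding radius_def by blast
  then have "Suc j < N e" "e \<le> 1/2" using assms(2) by auto
  with mono[of \<delta> e] show ?thesis using assms(2) e(2) by simp
qed

lemma finite_radius_gt:
  assumes mono: "\<And>a b. 0 < a \<Longrightarrow> a \<le> b \<Longrightarrow> b \<le> 1 \<Longrightarrow> N b \<le> N a" and "0 < \<delta>"
  shows "finite {j. \<delta> < radius N j}"
proof (rule finite_subset)
  show "{j. \<delta> < radius N j} \<subseteq> {..<N \<delta>}"
    using Suc_less_if_less_radius[of N, OF mono \<open>0 < \<delta>\<close>] by (simp add: subset_eq Suc_lessD)
qed simp

lemma card_radius_gt:
  assumes mono: "\<And>a b. 0 < a \<Longrightarrow> a \<le> b \<Longrightarrow> b \<le> 1 \<Longrightarrow> N b \<le> N a"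
    and "0 < \<epsilon>" "\<epsilon> \<le> 1/2" "\<epsilon> \<notin> range (radius N)"
  shows "card {j. \<epsilon> < radius N j} = N \<epsilon> - 1"
proof -
  have "\<epsilon> < radius N j \<longleftrightarrow> j < N \<epsilon> - 1" for j
  proof
    assume "j < N \<epsilon> - 1"
    then have "\<epsilon> \<le> radius N j" using le_radius[OF assms(2,3), of j N] by linarith
    moreover have "\<epsilon> \<noteq> radius N j" using assms(4) by (metis rangeI)
    ultimately show "\<epsilon> < radius N j" by simp
  qed (use Suc_less_if_less_radius[of N, OF mono \<open>0 < \<epsilon>\<close>] in fastforce)
  then have "{j. \<epsilon> < radius N j} = {..<N \<epsilon> - 1}" by blast
  then show ?thesis by simp
qed

section \<open>Sample means of independent copies\<close>

lemma integral_PiM_component: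
  fixes g :: "'a \<Rightarrow> real"
  assumes M: "prob_space M" and i: "i \<in> I" and g: "g \<in> borel_measurable M"
  shows "(\<integral>\<omega>. g (\<omega> i) \<partial>PiM I (\<lambda>_. M)) = (\<integral>x. g x \<partial>M)"
proof -
  have "(\<integral>\<omega>. g (\<omega> i) \<partial>PiM I (\<lambda>_. M)) = (\<integral>x. g x \<partial>distr (PiM I (\<lambda>_. M)) M (\<lambda>\<omega>. \<omega> i))"
    using i g by (intro integral_distr[symmetric] measurable_component_singleton) auto
  also have "distr (PiM I (\<lambda>_. M)) M (\<lambda>\<omega>. \<omega> i) = M"
    using distr_PiM_component[of I "\<lambda>_. M" i] M i by simp
  finally show ?thesis .
qed

lemma integral_sample_mean:
  fixes g :: "'a \<Rightarrow> real" and n :: nat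
  assumes M: "prob_space M" and g: "integrable M g" and n: "0 < n"
  shows "(\<integral>\<omega>. (\<Sum>i<n. g (\<omega> i)) / n \<partial>PiM {..<n} (\<lambda>_. M)) = (\<integral>x. g x \<partial>M)"
proof -
  have "integrable (PiM {..<n} (\<lambda>_. M)) (\<lambda>\<omega>. g (\<omega> i))" if "i < n" for i
  proof -
    have "integrable (distr (PiM {..<n} (\<lambda>_. M)) M (\<lambda>\<omega>. \<omega> i)) g"
      using distr_PiM_component[of "{..<n}" "\<lambda>_. M" i] M g that by simp
    then show ?thesis
      using that g by (subst (asm) integrable_distr_eq) (auto intro: measurable_component_singleton)
  qed
  then have "(\<integral>\<omega>. (\<Sum>i<n. g (\<omega> i)) \<partial>PiM {..<n} (\<lambda>_. M))
      = (\<Sum>i<n. \<integral>\<omega>. g (\<omega> i) \<partial>PiM {..<n} (\<lambda>_. M))"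
    by (intro Bochner_Integration.integral_sum) auto
  also have "\<dots> = (\<Sum>i<n. \<integral>x. g x \<partial>M)"
    using M g by (intro sum.cong refl integral_PiM_component) auto
  finally show ?thesis using n by simp
qed

lemma integral_PiM_centered_pair:
  fixes h :: "'a \<Rightarrow> real"
  assumes M: "prob_space M" and h: "integrable M h" "(\<integral>x. h x \<partial>M) = 0"
    and I: "finite I" "i \<in> I" "k \<in> I" "i \<noteq> k"
  shows "(\<integral>\<omega>. h (\<omega> i) * h (\<omega> k) \<partial>PiM I (\<lambda>_. M)) = 0"
proof -
  interpret product_prob_space "\<lambda>_. M" I
    using M by (simp add: product_prob_space_def product_sigma_finite_def
        product_prob_space_axioms_def prob_space_imp_sigma_finite)
  define f where "f = (\<lambda>l x. if l \<in> {i, k} then h x else 1)"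
  have "(\<Prod>l\<in>I. f l (\<omega> l)) = (\<Prod>l\<in>I \<inter> {i, k}. h (\<omega> l))" for \<omega>
    using I(1) by (simp add: f_def prod.inter_restrict)
  then have "h (\<omega> i) * h (\<omega> k) = (\<Prod>l\<in>I. f l (\<omega> l))" for \<omega>
    using I by (simp add: Int_absorb1)
  moreover have "(\<integral>\<omega>. (\<Prod>l\<in>I. f l (\<omega> l)) \<partial>PiM I (\<lambda>_. M)) = (\<Prod>l\<in>I. \<integral>x. f l x \<partial>M)"
    using I(1) proof (rule product_integral_prod)
    show "integrable M (f l)" for l by (cases "l \<in> {i, k}") (simp_all add: f_def h)
  qed
  ultimately have "(\<integral>\<omega>. h (\<omega> i) * h (\<omega> k) \<partial>PiM I (\<lambda>_. M)) = (\<Prod>l\<in>I. \<integral>x. f l x \<partial>M)"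
    by simp
  also have "\<dots> = 0"
    using I h by (intro prod_zero bexI[of _ i]) (auto simp: f_def)
  finally show ?thesis .
qed

lemma integral_PiM_sum_square_le:
  fixes h :: "'a \<Rightarrow> real" and n :: nat
  assumes M: "prob_space M" and h: "h \<in> borel_measurable M" "(\<integral>x. h x \<partial>M) = 0"
    and h_bound: "\<And>x. x \<in> space M \<Longrightarrow> \<bar>h x\<bar> \<le> 1"
  shows "(\<integral>\<omega>. (\<Sum>i<n. h (\<omega> i))\<^sup>2 \<partial>PiM {..<n} (\<lambda>_. M)) \<le> n"
proof -
  let ?P = "PiM {..<n} (\<lambda>_. M)"
  interpret M: prob_space M by (rule M)
  interpret P: prob_space ?P by (intro prob_space_PiM M)
  have h_int: "integrable M h"
    using h h_bound by (intro M.integrable_const_bound[where B=1]) auto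
  have prod_bound: "\<bar>h (\<omega> i) * h (\<omega> k)\<bar> \<le> 1" if "\<omega> \<in> space ?P" "i < n" "k < n" for \<omega> i k
    using that h_bound by (auto simp: space_PiM abs_mult intro!: mult_le_one)
  have prod_int: "integrable ?P (\<lambda>\<omega>. h (\<omega> i) * h (\<omega> k))" if "i < n" "k < n" for i k
    using that prod_bound h(1)
    by (intro P.integrable_const_bound[where B=1]) (auto intro!: AE_I2 measurable_component_singleton)
  have diag: "(\<integral>\<omega>. h (\<omega> i) * h (\<omega> i) \<partial>?P) \<le> 1" if "i < n" for i
  proof -
    have "(\<integral>\<omega>. h (\<omega> i) * h (\<omega> i) \<partial>?P) \<le> (\<integral>\<omega>. 1 \<partial>?P)"
      using that prod_bound[of _ i i] prod_int[of i i] by (intro integral_mono) (auto simp: abs_le_iff)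
    then show ?thesis by (simp add: P.prob_space)
  qed
  have off_diag: "(\<Sum>k<n. \<integral>\<omega>. h (\<omega> i) * h (\<omega> k) \<partial>?P) = (\<integral>\<omega>. h (\<omega> i) * h (\<omega> i) \<partial>?P)"
    if "i < n" for i
  proof -
    have "(\<Sum>k<n. \<integral>\<omega>. h (\<omega> i) * h (\<omega> k) \<partial>?P)
        = (\<Sum>k<n. if k = i then \<integral>\<omega>. h (\<omega> i) * h (\<omega> i) \<partial>?P else 0)"
      using that by (intro sum.cong) (auto intro!: integral_PiM_centered_pair[OF M h_int h(2)])
    then show ?thesis using that by simp
  qed
  have "(\<integral>\<omega>. (\<Sum>i<n. h (\<omega> i))\<^sup>2 \<partial>?P) = (\<integral>\<omega>. (\<Sum>i<n. \<Sum>k<n. h (\<omega> i) * h (\<omega> k)) \<partial>?P)"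
    by (simp add: power2_eq_square sum_product)
  also have "\<dots> = (\<Sum>i<n. \<integral>\<omega>. (\<Sum>k<n. h (\<omega> i) * h (\<omega> k)) \<partial>?P)"
    by (rule Bochner_Integration.integral_sum) (auto intro!: integrable_sum prod_int)
  also have "\<dots> = (\<Sum>i<n. \<Sum>k<n. \<integral>\<omega>. h (\<omega> i) * h (\<omega> k) \<partial>?P)"
    by (intro sum.cong refl Bochner_Integration.integral_sum) (auto intro: prod_int)
  also have "\<dots> = (\<Sum>i<n. \<integral>\<omega>. h (\<omega> i) * h (\<omega> i) \<partial>?P)"
    using off_diag by simp
  also have "\<dots> \<le> (\<Sum>i<n. 1)"
    using diag by (intro sum_mono) simp
  finally show ?thesis by simp
qed

lemma (in prob_space) expectation_abs_le_sqrt_second_moment: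
  fixes f :: "'a \<Rightarrow> real"
  assumes "integrable M f" "integrable M (\<lambda>x. (f x)\<^sup>2)"
  shows "expectation (\<lambda>x. \<bar>f x\<bar>) \<le> sqrt (expectation (\<lambda>x. (f x)\<^sup>2))"
proof -
  have "(expectation (\<lambda>x. \<bar>f x\<bar>))\<^sup>2 \<le> expectation (\<lambda>x. (f x)\<^sup>2)"
    using variance_positive[of "\<lambda>x. \<bar>f x\<bar>"] variance_eq[of "\<lambda>x. \<bar>f x\<bar>"] assms by simp
  then show ?thesis by (rule real_le_rsqrt)
qed

lemma sample_mean_abs_deviation_le:
  fixes g :: "'a \<Rightarrow> real" and n :: nat
  assumes M: "prob_space M" and g: "g \<in> borel_measurable M"
    and g_range: "\<And>x. x \<in> space M \<Longrightarrow> 0 \<le> g x \<and> g x \<le> 1" and n: "0 < n"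
  shows "(\<integral>\<omega>. \<bar>(\<Sum>i<n. g (\<omega> i)) / n - (\<integral>x. g x \<partial>M)\<bar> \<partial>PiM {..<n} (\<lambda>_. M)) \<le> 1 / sqrt n"
proof -
  let ?P = "PiM {..<n} (\<lambda>_. M)"
  interpret M: prob_space M by (rule M)
  interpret P: prob_space ?P by (intro prob_space_PiM M)
  define p where "p = (\<integral>x. g x \<partial>M)"
  define h where "h = (\<lambda>x. g x - p)"
  define Z where "Z \<omega> = (\<Sum>i<n. h (\<omega> i)) / n" for \<omega>
  have g_int: "integrable M g"
    using g g_range by (intro M.integrable_const_bound[where B=1]) auto
  have "0 \<le> p" "p \<le> 1"
    using g_range g_int M.prob_space integral_nonneg_AE[of g M] integral_mono[of M g "\<lambda>_. 1"]
    by (auto simp: p_def)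
  then have h_bound: "\<bar>h x\<bar> \<le> 1" if "x \<in> space M" for x
    using g_range[OF that] by (auto simp: h_def)
  have h_meas: "h \<in> borel_measurable M" using g by (simp add: h_def)
  have h_mean: "(\<integral>x. h x \<partial>M) = 0"
    using g_int by (simp add: h_def p_def M.prob_space)
  have Z_eq: "\<bar>(\<Sum>i<n. g (\<omega> i)) / n - p\<bar> = \<bar>Z \<omega>\<bar>" for \<omega>
    using n by (simp add: Z_def h_def sum_subtractf field_simps)
  have Z_meas: "Z \<in> borel_measurable ?P"
    unfolding Z_def using h_meas by (auto intro!: measurable_compose[OF measurable_component_singleton])
  have "\<bar>Z \<omega>\<bar> \<le> 1" if "\<omega> \<in> space ?P" for \<omega>
  proof -
    have "\<bar>\<Sum>i<n. h (\<omega> i)\<bar> \<le> (\<Sum>i<n. 1)"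
      using that h_bound by (intro order_trans[OF sum_abs sum_mono]) (auto simp: space_PiM)
    then show ?thesis using n by (simp add: Z_def)
  qed
  then have "integrable ?P Z" "integrable ?P (\<lambda>\<omega>. (Z \<omega>)\<^sup>2)"
    using Z_meas by (auto intro!: P.integrable_const_bound[where B=1] AE_I2 simp: abs_square_le_1)
  then have "(\<integral>\<omega>. \<bar>Z \<omega>\<bar> \<partial>?P) \<le> sqrt (\<integral>\<omega>. (Z \<omega>)\<^sup>2 \<partial>?P)"
    by (rule P.expectation_abs_le_sqrt_second_moment)
  also have "(\<integral>\<omega>. (Z \<omega>)\<^sup>2 \<partial>?P) = (\<integral>\<omega>. (\<Sum>i<n. h (\<omega> i))\<^sup>2 \<partial>?P) / (real n)\<^sup>2"
    by (simp add: Z_def power_divide)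
  also have "\<dots> \<le> n / (real n)\<^sup>2"
    by (intro divide_right_mono integral_PiM_sum_square_le[OF M h_meas h_mean h_bound]) auto
  also have "\<dots> = 1 / n" by (simp add: power2_eq_square)
  finally show ?thesis by (simp add: Z_eq p_def[symmetric] real_sqrt_divide real_sqrt_le_mono)
qed

lemma integral_of_bool: "(\<integral>x. of_bool (P x) \<partial>M) = measure M {x \<in> space M. P x}"
proof -
  have "(\<integral>x. of_bool (P x) \<partial>M) = (\<integral>x. indicator {x. P x} x \<partial>M)"
    by (simp add: indicator_def)
  also have "\<dots> = measure M {x \<in> space M. P x}" by (simp add: Int_def conj_commute)
  finally show ?thesis .
qed

definition sample_frequency :: "nat \<Rightarrow> ('a \<Rightarrow> bool) \<Rightarrow> (nat \<Rightarrow> 'a) \<Rightarrow> real" where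
  "sample_frequency n Q \<omega> = (\<Sum>i<n. of_bool (Q (\<omega> i))) / real n"

lemma sample_frequency_nonneg: "0 \<le> sample_frequency n Q \<omega>"
  by (simp add: sample_frequency_def)

lemma sample_frequency_le_1: "sample_frequency n Q \<omega> \<le> 1"
proof -
  have "card ({..<n} \<inter> {i. Q (\<omega> i)}) \<le> n"
    by (metis card_lessThan card_mono finite_lessThan inf_le1)
  then show ?thesis by (cases "n = 0") (simp_all add: sample_frequency_def divide_le_eq_1)
qed

lemma sample_frequency_mono:
  "(\<And>x. Q x \<Longrightarrow> Q' x) \<Longrightarrow> sample_frequency n Q \<omega> \<le> sample_frequency n Q' \<omega>"
  unfolding sample_frequency_def by (intro divide_right_mono sum_mono) auto

lemma borel_measurable_sample_frequency[measurable]: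
  assumes [measurable]: "Q \<in> M \<rightarrow>\<^sub>M count_space UNIV"
  shows "sample_frequency n Q \<in> borel_measurable (PiM {..<n} (\<lambda>_. M))"
  unfolding sample_frequency_def by measurable

lemma integrable_sample_frequency:
  assumes "prob_space M" "Q \<in> M \<rightarrow>\<^sub>M count_space UNIV"
  shows "integrable (PiM {..<n} (\<lambda>_. M)) (sample_frequency n Q)"
proof -
  interpret P: prob_space "PiM {..<n} (\<lambda>_. M)" by (intro prob_space_PiM assms(1))
  show ?thesis
    using assms sample_frequency_nonneg[of n Q] sample_frequency_le_1[of n Q]
    by (intro P.integrable_const_bound[where B=1]) (auto intro!: AE_I2)
qed

lemma integral_sample_frequency:
  assumes M: "prob_space M" and Q: "Q \<in> M \<rightarrow>\<^sub>M count_space UNIV" and n: "0 < n"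
  shows "(\<integral>\<omega>. sample_frequency n Q \<omega> \<partial>PiM {..<n} (\<lambda>_. M)) = measure M {x \<in> space M. Q x}"
proof -
  interpret M: prob_space M by (rule M)
  have "integrable M (\<lambda>x. of_bool (Q x) :: real)"
    using Q by (intro M.integrable_const_bound[where B=1]) auto
  from integral_sample_mean[OF M this n] show ?thesis
    by (simp add: sample_frequency_def integral_of_bool)
qed

lemma sample_frequency_abs_deviation_le:
  assumes M: "prob_space M" and Q: "Q \<in> M \<rightarrow>\<^sub>M count_space UNIV" and n: "0 < n"
  shows "(\<integral>\<omega>. \<bar>sample_frequency n Q \<omega> - measure M {x \<in> space M. Q x}\<bar> \<partial>PiM {..<n} (\<lambda>_. M))
    \<le> 1 / sqrt n"
  using sample_mean_abs_deviation_le[OF M _ _ n, of "\<lambda>x. of_bool (Q x)"] Q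
  by (simp add: sample_frequency_def integral_of_bool)

section \<open>Uniform deviation of coordinate frequencies\<close>

lemma SUP_abs_diff_le_split:
  fixes p q :: "nat \<Rightarrow> real"
  assumes fin: "finite {j. \<delta> < p j}" and "0 \<le> \<delta>" "0 \<le> w"
    and nonneg: "\<And>j. 0 \<le> p j" "\<And>j. 0 \<le> q j" and light: "\<And>j. p j \<le> \<delta> \<Longrightarrow> q j \<le> w"
  shows "(SUP j. \<bar>q j - p j\<bar>) \<le> (\<Sum>j | \<delta> < p j. \<bar>q j - p j\<bar>) + w + \<delta>"
proof (rule cSUP_least)
  fix j
  show "\<bar>q j - p j\<bar> \<le> (\<Sum>j | \<delta> < p j. \<bar>q j - p j\<bar>) + w + \<delta>"
  proof (cases "\<delta> < p j")
    case True
    then have "\<bar>q j - p j\<bar> \<le> (\<Sum>j | \<delta> < p j. \<bar>q j - p j\<bar>)"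
      using fin by (intro member_le_sum) auto
    then show ?thesis using assms(2,3) by linarith
  next
    case False
    then have "\<bar>q j - p j\<bar> \<le> w + \<delta>" using light[of j] nonneg[of j] by auto
    moreover have "0 \<le> (\<Sum>j | \<delta> < p j. \<bar>q j - p j\<bar>)" by (intro sum_nonneg) auto
    ultimately show ?thesis by linarith
  qed
qed simp

lemma measurable_cube_coordinate:
  assumes "sets M = sets cube_space"
  shows "(\<lambda>x. x j) \<in> M \<rightarrow>\<^sub>M count_space UNIV"
  using assms by (simp add: measurable_cong_sets[OF assms refl] cube_space_def)

lemma sets_cube_exists_coordinate:
  assumes "sets M = sets cube_space"
  shows "{x \<in> space M. \<exists>j\<in>L. x j} \<in> sets M"
proof -
  have "{x \<in> space M. \<exists>j\<in>L. x j} = (\<Union>j\<in>L. {x \<in> space M. x j})" by auto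
  moreover have "{x \<in> space M. x j} \<in> sets M" for j
    using measurable_cube_coordinate[OF assms, of j] by (simp add: pred_def[symmetric])
  ultimately show ?thesis by auto
qed

lemma Delta_eq_sample_frequency:
  "Delta M n = (\<integral>\<omega>. (SUP j. \<bar>sample_frequency n (\<lambda>x. x j) \<omega> - measure M {x \<in> space M. x j}\<bar>)
    \<partial>PiM {..<n} (\<lambda>_. M))"
  by (simp add: Delta_def sample_frequency_def)

lemma Delta_nonneg:
  assumes "prob_space M"
  shows "0 \<le> Delta M n"
proof -
  have "0 \<le> (SUP j. \<bar>sample_frequency n (\<lambda>x. x j) \<omega> - measure M {x \<in> space M. x j}\<bar>)" for \<omega>
  proof -
    have "\<bar>sample_frequency n (\<lambda>x. x j) \<omega> - measure M {x \<in> space M. x j}\<bar> \<le> 1" for j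
      using sample_frequency_nonneg[of n "\<lambda>x. x j" \<omega>] sample_frequency_le_1[of n "\<lambda>x. x j" \<omega>]
        measure_nonneg[of M "{x \<in> space M. x j}"] prob_space.prob_le_1[OF assms, of "{x \<in> space M. x j}"]
      by (intro abs_leI; linarith)
    then have "bdd_above (range (\<lambda>j. \<bar>sample_frequency n (\<lambda>x. x j) \<omega> - measure M {x \<in> space M. x j}\<bar>))"
      by (intro bdd_aboveI2) auto
    from cSUP_upper[OF UNIV_I this, of 0] show ?thesis by linarith
  qed
  then show ?thesis unfolding Delta_eq_sample_frequency by (intro integral_nonneg_AE) auto
qed

lemma Delta_le:
  fixes M :: "(nat \<Rightarrow> bool) measure" and n :: nat
  defines "p \<equiv> \<lambda>j. measure M {x \<in> space M. x j}"
  assumes M: "prob_space M" "sets M = sets cube_space" and n: "0 < n" and "0 \<le> \<delta>"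
    and fin: "finite {j. \<delta> < p j}"
  shows "Delta M n \<le> card {j. \<delta> < p j} / sqrt n + measure M {x \<in> space M. \<exists>j. p j \<le> \<delta> \<and> x j} + \<delta>"
proof -
  let ?P = "PiM {..<n} (\<lambda>_. M)" and ?H = "{j. \<delta> < p j}"
  interpret P: prob_space ?P by (intro prob_space_PiM M)
  define W where "W x = (\<exists>j. p j \<le> \<delta> \<and> x j)" for x :: "nat \<Rightarrow> bool"
  define S where "S j = sample_frequency n (\<lambda>x :: nat \<Rightarrow> bool. x j)" for j :: nat
  have coord[measurable]: "(\<lambda>x. x j) \<in> M \<rightarrow>\<^sub>M count_space UNIV" for j
    by (rule measurable_cube_coordinate[OF M(2)])
  have "{x \<in> space M. W x} \<in> sets M"
    using sets_cube_exists_coordinate[OF M(2), of "{j. p j \<le> \<delta>}"] by (simp add: W_def)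
  then have W_meas[measurable]: "W \<in> M \<rightarrow>\<^sub>M count_space UNIV"
    by (simp add: pred_def[symmetric])
  have S_int: "integrable ?P (\<lambda>\<omega>. \<bar>S j \<omega> - p j\<bar>)" for j
    unfolding S_def using integrable_sample_frequency[OF M(1) coord] by simp
  have bound: "(SUP j. \<bar>S j \<omega> - p j\<bar>) \<le> (\<Sum>j\<in>?H. \<bar>S j \<omega> - p j\<bar>) + sample_frequency n W \<omega> + \<delta>"
    for \<omega>
  proof (rule SUP_abs_diff_le_split)
    show "S j \<omega> \<le> sample_frequency n W \<omega>" if "p j \<le> \<delta>" for j
      unfolding S_def using that by (intro sample_frequency_mono) (auto simp: W_def)
  qed (use fin \<open>0 \<le> \<delta>\<close> in \<open>auto simp: S_def p_def sample_frequency_nonneg\<close>)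
  have "Delta M n = (\<integral>\<omega>. (SUP j. \<bar>S j \<omega> - p j\<bar>) \<partial>?P)"
    by (simp add: Delta_eq_sample_frequency S_def p_def)
  also have "\<dots> \<le> (\<integral>\<omega>. (\<Sum>j\<in>?H. \<bar>S j \<omega> - p j\<bar>) + sample_frequency n W \<omega> + \<delta> \<partial>?P)"
    using bound S_int integrable_sample_frequency[OF M(1) W_meas] \<open>0 \<le> \<delta>\<close>
    by (intro integral_mono') (auto intro!: add_nonneg_nonneg sum_nonneg sample_frequency_nonneg)
  also have "\<dots> = (\<Sum>j\<in>?H. \<integral>\<omega>. \<bar>S j \<omega> - p j\<bar> \<partial>?P) + measure M {x \<in> space M. W x} + \<delta>"
    using S_int integrable_sample_frequency[OF M(1) W_meas]
    by (simp add: integral_sample_frequency[OF M(1) W_meas n] P.prob_space)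
  also have "\<dots> \<le> card ?H / sqrt n + measure M {x \<in> space M. W x} + \<delta>"
    using sum_mono[where K="?H", OF sample_frequency_abs_deviation_le[OF M(1) coord n]]
    by (simp add: S_def p_def)
  finally show ?thesis by (simp add: W_def)
qed

section \<open>The seeded distribution on the cube\<close>

definition unit_interval_measure :: "real measure" where
  "unit_interval_measure = uniform_measure lborel {0..1}"

definition seed_measure :: "(nat \<Rightarrow> real) measure" where
  "seed_measure = PiM UNIV (\<lambda>_. unit_interval_measure)"

definition seeded_bits :: "(nat \<Rightarrow> real) \<Rightarrow> (nat \<Rightarrow> real) \<Rightarrow> nat \<Rightarrow> bool" where
  "seeded_bits r \<omega> j \<longleftrightarrow> \<omega> 0 < 2 * r j \<and> \<omega> (Suc j) < 1/2"

definition cube_measure :: "(nat \<Rightarrow> real) \<Rightarrow> (nat \<Rightarrow> bool) measure" where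
  "cube_measure r = distr seed_measure cube_space (seeded_bits r)"

lemma prob_space_unit_interval_measure: "prob_space unit_interval_measure"
  unfolding unit_interval_measure_def by (rule prob_space_uniform_measure) auto

lemma sets_unit_interval_measure[measurable_cong]: "sets unit_interval_measure = sets borel"
  by (simp add: unit_interval_measure_def)

lemma measure_unit_interval_lessThan:
  assumes "0 \<le> c" "c \<le> 1"
  shows "measure unit_interval_measure {..<c} = c"
proof -
  have "{0..1} \<inter> {..<c} = {0..<c}" using assms by auto
  then show ?thesis using assms by (simp add: unit_interval_measure_def)
qed

interpretation seed: product_prob_space "\<lambda>_. unit_interval_measure" UNIV
  using prob_space_unit_interval_measure
  by (simp add: product_prob_space_def product_sigma_finite_def product_prob_space_axioms_def
      prob_space_imp_sigma_finite)

lemma prob_space_seed_measure: "prob_space seed_measure"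
  unfolding seed_measure_def by (rule seed.prob_space_axioms)

lemma measure_seed_measure_Collect:
  assumes "finite J" "\<And>i. i \<in> J \<Longrightarrow> X i \<in> sets borel"
  shows "measure seed_measure {\<omega> \<in> space seed_measure. \<forall>i\<in>J. \<omega> i \<in> X i}
    = (\<Prod>i\<in>J. measure unit_interval_measure (X i))"
proof -
  have "emeasure seed_measure {\<omega> \<in> space seed_measure. \<forall>i\<in>J. \<omega> i \<in> X i}
      = (\<Prod>i\<in>J. ennreal (measure unit_interval_measure (X i)))"
    unfolding seed_measure_def using assms by (simp add: seed.emeasure_PiM_Collect finite_measure.emeasure_eq_measure[OF prob_space.finite_measure[OF prob_space_unit_interval_measure]])
  then show ?thesis by (simp add: measure_def prod_ennreal prod_nonneg)
qed

lemma measurable_seeded_bits: "seeded_bits r \<in> seed_measure \<rightarrow>\<^sub>M cube_space"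
  unfolding cube_space_def seed_measure_def
proof (rule measurable_PiM_single')
  show "(\<lambda>\<omega>. seeded_bits r \<omega> j) \<in> PiM UNIV (\<lambda>_. unit_interval_measure) \<rightarrow>\<^sub>M count_space UNIV" for j
    unfolding seeded_bits_def pred_def[symmetric] by measurable
qed (auto simp: space_PiM)

lemma prob_space_cube_measure: "prob_space (cube_measure r)"
  unfolding cube_measure_def
  by (intro prob_space.prob_space_distr prob_space_seed_measure measurable_seeded_bits)

lemma sets_cube_measure: "sets (cube_measure r) = sets cube_space"
  by (simp add: cube_measure_def)

lemma space_cube_space: "space cube_space = UNIV"
  by (simp add: cube_space_def space_PiM)

lemma measure_cube_measure:
  assumes "{x \<in> space cube_space. P x} \<in> sets cube_space"
  shows "measure (cube_measure r) {x \<in> space (cube_measure r). P x}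
    = measure seed_measure {\<omega> \<in> space seed_measure. P (seeded_bits r \<omega>)}"
  unfolding cube_measure_def using assms measurable_seeded_bits
  by (subst measure_distr) (auto simp: space_cube_space intro!: arg_cong[where f="measure seed_measure"])

lemma measure_seeded_bits_coordinate:
  assumes "0 \<le> r j" "r j \<le> 1/2"
  shows "measure seed_measure {\<omega> \<in> space seed_measure. seeded_bits r \<omega> j} = r j"
proof -
  have "{\<omega> \<in> space seed_measure. seeded_bits r \<omega> j}
      = {\<omega> \<in> space seed_measure. \<forall>l\<in>{0, Suc j}. \<omega> l \<in> (if l = 0 then {..<2 * r j} else {..<1/2})}"
    by (auto simp: seeded_bits_def)
  also have "measure seed_measure \<dots> = measure unit_interval_measure {..<2 * r j} * measure unit_interval_measure {..<1/2}"
    by (subst measure_seed_measure_Collect) auto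
  also have "\<dots> = r j" using assms by (simp add: measure_unit_interval_lessThan)
  finally show ?thesis .
qed

lemma measure_seeded_bits_pair:
  assumes r: "\<And>j. 0 \<le> r j \<and> r j \<le> 1/2" and "i \<noteq> j"
  shows "measure seed_measure {\<omega> \<in> space seed_measure. seeded_bits r \<omega> i \<and> seeded_bits r \<omega> j}
    = min (r i) (r j) / 2"
proof -
  have "{\<omega> \<in> space seed_measure. seeded_bits r \<omega> i \<and> seeded_bits r \<omega> j}
      = {\<omega> \<in> space seed_measure. \<forall>l\<in>{0, Suc i, Suc j}.
          \<omega> l \<in> (if l = 0 then {..<2 * min (r i) (r j)} else {..<1/2})}"
    by (auto simp: seeded_bits_def)
  also have "measure seed_measure \<dots>
      = measure unit_interval_measure {..<2 * min (r i) (r j)} * (measure unit_interval_measure {..<1/2})\<^sup>2"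
    using \<open>i \<noteq> j\<close> by (subst measure_seed_measure_Collect) (auto simp: power2_eq_square)
  also have "\<dots> = min (r i) (r j) / 2"
    using measure_unit_interval_lessThan[of "2 * min (r i) (r j)"] r[of i] r[of j]
    by (simp add: measure_unit_interval_lessThan power2_eq_square min_def)
  finally show ?thesis .
qed

lemma measure_cube_measure_coordinate:
  assumes "0 \<le> r j" "r j \<le> 1/2"
  shows "measure (cube_measure r) {x \<in> space (cube_measure r). x j} = r j"
proof -
  have "{x \<in> space cube_space. x j} \<in> sets cube_space"
    unfolding cube_space_def pred_def[symmetric] by measurable
  then show ?thesis
    using measure_seeded_bits_coordinate[of r j, OF assms] by (simp add: measure_cube_measure)
qed

lemma xi_cube_measure:
  assumes r: "\<And>j. 0 \<le> r j \<and> r j \<le> 1/2" and "i \<noteq> j"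
  shows "xi (cube_measure r) i j = max (r i) (r j)"
proof -
  interpret seed_measure: prob_space seed_measure by (rule prob_space_seed_measure)
  define A where "A l = {\<omega> \<in> space seed_measure. seeded_bits r \<omega> l}" for l
  have A_sets: "A l \<in> sets seed_measure" for l
    unfolding A_def seed_measure_def seeded_bits_def pred_def[symmetric] by measurable
  have "{x \<in> space cube_space. x i \<noteq> x j} \<in> sets cube_space"
    unfolding cube_space_def pred_def[symmetric] by measurable
  then have "xi (cube_measure r) i j = measure seed_measure ((A i \<union> A j) - (A i \<inter> A j))"
    unfolding xi_def by (subst measure_cube_measure) (auto simp: A_def intro!: arg_cong[where f="measure _"])
  also have "\<dots> = measure seed_measure (A i \<union> A j) - measure seed_measure (A i \<inter> A j)"
    using A_sets by (intro measure_Diff) (auto simp: seed_measure.fmeasurable_eq_sets)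
  also have "\<dots> = measure seed_measure (A i) + measure seed_measure (A j) - 2 * measure seed_measure (A i \<inter> A j)"
    using A_sets by (subst measure_Un3) (auto simp: seed_measure.fmeasurable_eq_sets)
  also have "A i \<inter> A j = {\<omega> \<in> space seed_measure. seeded_bits r \<omega> i \<and> seeded_bits r \<omega> j}"
    by (auto simp: A_def)
  also have "measure seed_measure (A i) + measure seed_measure (A j) - 2 * measure seed_measure \<dots>
      = r i + r j - min (r i) (r j)"
    using measure_seeded_bits_coordinate[of r i] measure_seeded_bits_coordinate[of r j] r[of i] r[of j]
      measure_seeded_bits_pair[of r i j, OF r \<open>i \<noteq> j\<close>]
    by (simp add: A_def)
  also have "\<dots> = max (r i) (r j)" by (simp add: max_def min_def)
  finally show ?thesis .
qed

lemma measure_cube_measure_light_le: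
  assumes "0 \<le> \<delta>" "2 * \<delta> \<le> 1"
  shows "measure (cube_measure r) {x \<in> space (cube_measure r). \<exists>j. r j \<le> \<delta> \<and> x j} \<le> 2 * \<delta>"
proof -
  interpret seed_measure: prob_space seed_measure by (rule prob_space_seed_measure)
  have "measure (cube_measure r) {x \<in> space (cube_measure r). \<exists>j\<in>{j. r j \<le> \<delta>}. x j}
      = measure seed_measure {\<omega> \<in> space seed_measure. \<exists>j\<in>{j. r j \<le> \<delta>}. seeded_bits r \<omega> j}"
    by (rule measure_cube_measure) (rule sets_cube_exists_coordinate[OF refl])
  then have "measure (cube_measure r) {x \<in> space (cube_measure r). \<exists>j. r j \<le> \<delta> \<and> x j}
      = measure seed_measure {\<omega> \<in> space seed_measure. \<exists>j. r j \<le> \<delta> \<and> seeded_bits r \<omega> j}"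
    by simp
  also have "\<dots> \<le> measure seed_measure {\<omega> \<in> space seed_measure. \<forall>l\<in>{0}. \<omega> l \<in> {..<2 * \<delta>}}"
  proof (rule seed_measure.finite_measure_mono)
    show "{\<omega> \<in> space seed_measure. \<forall>l\<in>{0}. \<omega> l \<in> {..<2 * \<delta>}} \<in> sets seed_measure"
      unfolding seed_measure_def by measurable
  next
    show "{\<omega> \<in> space seed_measure. \<exists>j. r j \<le> \<delta> \<and> seeded_bits r \<omega> j}
        \<subseteq> {\<omega> \<in> space seed_measure. \<forall>l\<in>{0}. \<omega> l \<in> {..<2 * \<delta>}}"
      unfolding seeded_bits_def by force
  qed
  also have "\<dots> = 2 * \<delta>"
    using assms by (subst measure_seed_measure_Collect) (simp_all add: measure_unit_interval_lessThan)
  finally show ?thesis .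
qed

lemma Delta_cube_measure_tendsto_zero:
  assumes r: "\<And>j. 0 \<le> r j \<and> r j \<le> 1/2" and fin: "\<And>\<delta>. 0 < \<delta> \<Longrightarrow> finite {j. \<delta> < r j}"
  shows "(\<lambda>n. Delta (cube_measure r) n) \<longlonglongrightarrow> 0"
proof (rule tendstoI)
  fix e :: real assume "0 < e"
  define \<delta> where "\<delta> = min (1/2) (e/6)"
  have \<delta>: "0 < \<delta>" "2 * \<delta> \<le> 1" "3 * \<delta> \<le> e/2" using \<open>0 < e\<close> by (auto simp: \<delta>_def)
  have p: "measure (cube_measure r) {x \<in> space (cube_measure r). x j} = r j" for j
    using r[of j] by (intro measure_cube_measure_coordinate) auto
  have "(\<lambda>n. card {j. \<delta> < r j} / sqrt n) \<longlonglongrightarrow> 0"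
    by (intro tendsto_divide_0[OF tendsto_const] filterlim_at_top_imp_at_infinity
        filterlim_compose[OF sqrt_at_top filterlim_real_sequentially])
  then have "eventually (\<lambda>n. card {j. \<delta> < r j} / sqrt n < e/2) sequentially"
    using \<open>0 < e\<close> by (intro order_tendstoD) auto
  moreover have "eventually (\<lambda>n. 0 < n) sequentially" by (rule eventually_gt_at_top)
  ultimately show "eventually (\<lambda>n. dist (Delta (cube_measure r) n) 0 < e) sequentially"
  proof eventually_elim
    case (elim n)
    have "Delta (cube_measure r) n \<le> card {j. \<delta> < r j} / sqrt n + 2 * \<delta> + \<delta>"
      using Delta_le[OF prob_space_cube_measure sets_cube_measure \<open>0 < n\<close>, of \<delta> r] fin[OF \<delta>(1)]
        measure_cube_measure_light_le[of \<delta> r] \<delta> by (simp add: p)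
    with elim \<delta>(3) have "Delta (cube_measure r) n < e" by linarith
    then show ?case using Delta_nonneg[OF prob_space_cube_measure, of r n] by simp
  qed
qed

lemma covnum_cube_measure_radius:
  assumes mono: "\<And>a b. 0 < a \<Longrightarrow> a \<le> b \<Longrightarrow> b \<le> 1 \<Longrightarrow> N b \<le> N a" and "1 \<le> N \<epsilon>"
    and \<epsilon>: "0 < \<epsilon>" "\<epsilon> \<le> 1/2" "\<epsilon> \<notin> range (radius N)"
  shows "covnum (cube_measure (radius N)) \<epsilon> = enat (N \<epsilon>)"
proof -
  have "covnum (cube_measure (radius N)) \<epsilon> = enat (card {j. \<epsilon> < radius N j} + 1)"
    using \<epsilon> radius_nonneg radius_le_half
    by (intro covnum_max_radii xi_cube_measure finite_radius_gt[of N, OF mono]) auto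
  also have "card {j. \<epsilon> < radius N j} + 1 = N \<epsilon>"
    using card_radius_gt[of N, OF mono \<epsilon>] \<open>1 \<le> N \<epsilon>\<close> by simp
  finally show ?thesis .
qed

theorem proposition5:
  fixes N :: "real \<Rightarrow> nat"
  assumes mono: "\<And>a b. 0 < a \<Longrightarrow> a \<le> b \<Longrightarrow> b \<le> 1 \<Longrightarrow> N b \<le> N a"
    and pos: "\<And>\<epsilon>. 0 < \<epsilon> \<Longrightarrow> \<epsilon> \<le> 1 \<Longrightarrow> N \<epsilon> \<ge> 1"
  shows "\<exists>(M :: (nat \<Rightarrow> bool) measure) (E :: real set).
           prob_space M \<and> sets M = sets cube_space \<and>
           countable E \<and> E \<subseteq> {0<..1} \<and>
           (\<forall>\<epsilon> \<in> {0<..1/2} - E. covnum M \<epsilon> = enat (N \<epsilon>)) \<and>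
           (\<lambda>n. Delta M n) \<longlonglongrightarrow> 0"
proof (intro exI conjI)
  let ?r = "radius N"
  show "prob_space (cube_measure ?r)" "sets (cube_measure ?r) = sets cube_space"
    by (rule prob_space_cube_measure sets_cube_measure)+
  show "countable ({0<..} \<inter> range ?r)" by simp
  show "{0<..} \<inter> range ?r \<subseteq> {0<..1}"
  proof clarify
    fix j assume "0 < ?r j"
    with radius_le_half[of N j] show "?r j \<in> {0<..1}" by simp
  qed
  show "\<forall>\<epsilon> \<in> {0<..1/2} - ({0<..} \<inter> range ?r). covnum (cube_measure ?r) \<epsilon> = enat (N \<epsilon>)"
    using covnum_cube_measure_radius[of N, OF mono] pos by auto
  show "(\<lambda>n. Delta (cube_measure ?r) n) \<longlonglongrightarrow> 0"
    using radius_nonneg radius_le_half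
    by (intro Delta_cube_measure_tendsto_zero finite_radius_gt[of N, OF mono]) auto
qed

end
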